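(* There is an absolute constant $C>0$ such that for all integers $k\ge 1$ and $r\ge 1$, \[ \sum_{a_1,\dots,a_r=1}^k \frac{|\mathscr{L}^*(\mathbf{a})|}{a_1\cdots a_r} \le C\,(2h_k)^r\, r!\int_{\Omega_r} \min_{0\le j\le r} 2^{-j}\big(k^{\xi_1}+\cdots+k^{\xi_j}+1\big)\, d\boldsymbol{\xi}, \] where $\mathbf{a}=(a_1,\dots,a_r)$ and $\Omega_r=\{(\xi_1,\dots,\xi_r): 0\le\xi_1\le\xi_2\le\cdots\le\xi_r\le 1\}$.
   Context: $h_k = 1+\frac12+\cdots+\frac1k$ is the $k$-th harmonic number. For a tuple $\mathbf{a}=(a_1,\dots,a_r)$, $\mathscr{L}^*(\mathbf{a}) = \{\sum_{i\in I} a_i : I\subset\{1,\dots,r\}\}$ is its set of subset sums, and $|\cdot|$ denotes cardinality. In the minimum, the term $j=0$ is $1$ (empty sum). *)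

theory Defs
  imports "HOL-Analysis.Analysis"
begin

definition harm :: "nat \<Rightarrow> real" where
  "harm k = (\<Sum>i=1..k. 1 / real i)"

definition subset_sums :: "nat \<Rightarrow> (nat \<Rightarrow> nat) \<Rightarrow> nat set" where
  "subset_sums r a = {(\<Sum>i\<in>I. a i) | I. I \<subseteq> {0..<r}}"

text \<open>Omega_r = {xi : 0 <= xi_1 <= ... <= xi_r <= 1}, coordinates indexed 0..r-1.\<close>
definition Omega :: "nat \<Rightarrow> (nat \<Rightarrow> real) set" where
  "Omega r = {\<xi> \<in> {0..<r} \<rightarrow>\<^sub>E UNIV.
      (\<forall>i<r. 0 \<le> \<xi> i \<and> \<xi> i \<le> 1) \<and> (\<forall>i j. i \<le> j \<and> j < r \<longrightarrow> \<xi> i \<le> \<xi> j)}"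

definition minfun :: "nat \<Rightarrow> nat \<Rightarrow> (nat \<Rightarrow> real) \<Rightarrow> real" where
  "minfun k r \<xi> = Min ((\<lambda>j. (1/2) ^ j * ((\<Sum>i<j. real k powr \<xi> i) + 1)) ` {0..r})"

end

theory Submission
  imports Defs "HOL-Combinatorics.Permutations"
begin

text \<open>
  Splitting a subset sum according to a set S of indices gives
  |L*(a)| \<le> (sum of a_i over S + 1) * 2^(r - |S|), so |L*(a)| is at most 2^r times
  G(a) = min over S of 2^(-|S|) (sum of a_i over S + 1).
  Cutting [0,1) at the points h_m / h_k gives intervals of lengths 1/(m h_k), so 1/(a_1 ... a_r)
  is h_k^r times the volume of a box, and the sum over a becomes h_k^r times the integral over
  the unit cube of G evaluated at the step function that equals m on the m-th interval.
  This integrand is symmetric in the coordinates, so the cube integral is at most r! times the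
  integral over the ordered simplex Omega_r. There the step function is at most e k^x, and
  choosing S to be an initial segment bounds the integrand by e times the minimum in the
  statement; hence C = e works.
\<close>

section \<open>Counting subset sums\<close>

definition subset_weight :: "(nat \<Rightarrow> real) \<Rightarrow> nat set \<Rightarrow> real" where
  "subset_weight x S = (1/2) ^ card S * (sum x S + 1)"

definition min_subset_weight :: "nat \<Rightarrow> (nat \<Rightarrow> real) \<Rightarrow> real" where
  "min_subset_weight r x = Min (subset_weight x ` Pow {0..<r})"

lemma min_subset_weight_le: "S \<subseteq> {0..<r} \<Longrightarrow> min_subset_weight r x \<le> subset_weight x S"
  unfolding min_subset_weight_def by (intro Min_le) auto

lemma min_subset_weight_attained:
  obtains S where "S \<subseteq> {0..<r}" "min_subset_weight r x = subset_weight x S"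
proof -
  have "min_subset_weight r x \<in> subset_weight x ` Pow {0..<r}"
    unfolding min_subset_weight_def by (intro Min_in) auto
  then show ?thesis using that by blast
qed

lemma min_subset_weight_nonneg: "(\<And>i. 0 \<le> x i) \<Longrightarrow> 0 \<le> min_subset_weight r x"
  unfolding min_subset_weight_def subset_weight_def
  by (subst Min_ge_iff) (auto intro!: mult_nonneg_nonneg add_nonneg_nonneg sum_nonneg)

lemma min_subset_weight_cong:
  "(\<And>i. i < r \<Longrightarrow> x i = y i) \<Longrightarrow> min_subset_weight r x = min_subset_weight r y"
proof -
  assume "\<And>i. i < r \<Longrightarrow> x i = y i"
  then have "subset_weight x ` Pow {0..<r} = subset_weight y ` Pow {0..<r}"
    unfolding subset_weight_def by (intro image_cong refl) (auto intro!: sum.cong)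
  then show ?thesis by (simp add: min_subset_weight_def)
qed

lemma min_subset_weight_permute:
  assumes "\<sigma> permutes {0..<r}"
  shows "min_subset_weight r (x \<circ> \<sigma>) = min_subset_weight r x"
proof -
  have "subset_weight x (\<sigma> ` S) = subset_weight (x \<circ> \<sigma>) S" for S
    using permutes_inj[OF assms]
    by (simp add: subset_weight_def card_image sum.reindex inj_on_subset[of \<sigma> UNIV])
  then have "subset_weight (x \<circ> \<sigma>) ` Pow {0..<r} = subset_weight x ` image \<sigma> ` Pow {0..<r}"
    by (simp add: image_image)
  also have "image \<sigma> ` Pow {0..<r} = Pow {0..<r}"
    using permutes_image[OF assms] by (rule image_Pow_surj)
  finally show ?thesis by (simp only: min_subset_weight_def)
qed

lemma borel_measurable_min_subset_weight:
  assumes "\<And>i. i < r \<Longrightarrow> (\<lambda>\<omega>. x \<omega> i) \<in> borel_measurable M"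
  shows "(\<lambda>\<omega>. min_subset_weight r (x \<omega>)) \<in> borel_measurable M"
  unfolding min_subset_weight_def subset_weight_def image_image
  using assms by (intro borel_measurable_Min borel_measurable_times borel_measurable_add
      borel_measurable_sum borel_measurable_const) auto

lemma card_subset_sums_le:
  assumes S: "S \<subseteq> {0..<r}"
  shows "card (subset_sums r a) \<le> (sum a S + 1) * 2 ^ (r - card S)"
proof -
  let ?R = "sum a ` Pow ({0..<r} - S)"
  have "subset_sums r a \<subseteq> (\<lambda>(u, v). u + v) ` ({0..sum a S} \<times> ?R)"
  proof
    fix s assume "s \<in> subset_sums r a"
    then obtain I where I: "I \<subseteq> {0..<r}" "s = sum a I" unfolding subset_sums_def by auto
    have "finite I" using I finite_subset by blast
    then have "sum a I = sum a (I \<inter> S) + sum a (I - S)"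
      by (metis Diff_Diff_Int Diff_subset sum.subset_diff)
    moreover have "sum a (I \<inter> S) \<le> sum a S"
      using S finite_subset by (intro sum_mono2) auto
    ultimately show "s \<in> (\<lambda>(u, v). u + v) ` ({0..sum a S} \<times> ?R)"
      using I by (intro image_eqI[of _ _ "(sum a (I \<inter> S), sum a (I - S))"]) auto
  qed
  then have "card (subset_sums r a) \<le> card ((\<lambda>(u, v). u + v) ` ({0..sum a S} \<times> ?R))"
    by (intro card_mono) auto
  also have "\<dots> \<le> card ({0..sum a S} \<times> ?R)"
    by (intro card_image_le) auto
  also have "\<dots> = (sum a S + 1) * card ?R"
    by (simp add: card_cartesian_product)
  also have "\<dots> \<le> (sum a S + 1) * card (Pow ({0..<r} - S))"
    by (intro mult_left_mono card_image_le) auto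
  also have "card (Pow ({0..<r} - S)) = 2 ^ (r - card S)"
    using S by (simp add: card_Pow card_Diff_subset finite_subset)
  finally show ?thesis .
qed

lemma card_subset_sums_le_min_subset_weight:
  "real (card (subset_sums r a)) \<le> 2 ^ r * min_subset_weight r (\<lambda>i. real (a i))"
proof -
  obtain S where S: "S \<subseteq> {0..<r}"
    and min: "min_subset_weight r (\<lambda>i. real (a i)) = subset_weight (\<lambda>i. real (a i)) S"
    by (rule min_subset_weight_attained)
  have "card S \<le> r" using S card_mono[of "{0..<r}" S] by auto
  then have "(2::real) ^ r = 2 ^ (r - card S) * 2 ^ card S" by (simp add: power_add[symmetric])
  then have "real ((sum a S + 1) * 2 ^ (r - card S)) = 2 ^ r * subset_weight (\<lambda>i. real (a i)) S"
    by (simp add: subset_weight_def field_simps)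
  then show ?thesis
    using card_subset_sums_le[OF S, of a] min by (metis of_nat_le_iff)
qed

section \<open>A harmonic partition of the unit interval\<close>

text \<open>HOL-Analysis has its own constant harm, hence the qualified name Defs.harm.\<close>
lemma harm_eq_harmonic_number: "Defs.harm n = (Harmonic_Numbers.harm n :: real)"
  unfolding Defs.harm_def Harmonic_Numbers.harm_def by (simp add: divide_inverse)

lemma harm_le_ln_plus_one: "k \<ge> 1 \<Longrightarrow> Defs.harm k \<le> ln (real k) + 1"
proof -
  assume "k \<ge> 1"
  then obtain n where n: "k = Suc n" by (cases k) auto
  have "Harmonic_Numbers.harm (Suc n) - ln (real (Suc n)) \<le> Harmonic_Numbers.harm (Suc 0) - ln (real (Suc 0))"
    using decseq_harm_diff_ln unfolding decseq_def by (metis zero_le)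
  then show ?thesis using n by (simp add: harm_eq_harmonic_number harm_expand)
qed

text \<open>The points h_m / h_k cut [0,1) into k intervals, the m-th of length 1/(m h_k).\<close>
definition harm_interval :: "nat \<Rightarrow> nat \<Rightarrow> real set" where
  "harm_interval k m = {Defs.harm (m - 1) / Defs.harm k ..< Defs.harm m / Defs.harm k}"

lemma harm_interval_sets [measurable]: "harm_interval k m \<in> sets borel"
  unfolding harm_interval_def by simp

lemma emeasure_harm_interval:
  assumes "k \<ge> 1" "m \<ge> 1"
  shows "emeasure lborel (harm_interval k m) = ennreal (1 / (real m * Defs.harm k))"
proof -
  have "Defs.harm m = Defs.harm (m - 1) + 1 / real m"
    using assms(2) by (cases m) (simp_all add: Defs.harm_def)
  moreover have "Defs.harm k > 0"
    using assms(1) by (simp add: harm_eq_harmonic_number)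
  ultimately show ?thesis
    unfolding harm_interval_def by (simp add: diff_divide_distrib add_divide_distrib)
qed

lemma harm_interval_subset:
  assumes "m \<le> k"
  shows "harm_interval k m \<subseteq> {0..<1}"
proof -
  have "0 \<le> Defs.harm (m - 1) / Defs.harm k"
    unfolding harm_eq_harmonic_number by (intro divide_nonneg_nonneg harm_nonneg)
  moreover have "Defs.harm m / Defs.harm k \<le> 1"
    unfolding harm_eq_harmonic_number using assms by (cases k) (auto simp: divide_le_eq_1 harm_mono)
  ultimately show ?thesis unfolding harm_interval_def by auto
qed

lemma harm_interval_disjoint:
  assumes "x \<in> harm_interval k m" "x \<in> harm_interval k m'"
  shows "m = m'"
proof (rule ccontr)
  have mono: "Defs.harm p / Defs.harm k \<le> Defs.harm q / Defs.harm k" if "p \<le> q" for p q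
    using that unfolding harm_eq_harmonic_number by (simp add: divide_right_mono harm_mono harm_nonneg)
  have "\<not> (x \<in> harm_interval k p \<and> x \<in> harm_interval k q)" if "p < q" for p q
  proof -
    have "Defs.harm p / Defs.harm k \<le> Defs.harm (q - 1) / Defs.harm k"
      using that by (intro mono) simp
    then show ?thesis unfolding harm_interval_def by auto
  qed
  moreover assume "m \<noteq> m'"
  ultimately show False using assms by (metis linorder_neqE_nat)
qed

definition harm_step :: "nat \<Rightarrow> real \<Rightarrow> real" where
  "harm_step k x = (\<Sum>m\<in>{1..k}. real m * indicator (harm_interval k m) x)"

lemma harm_step_eq:
  assumes "x \<in> harm_interval k m" "m \<in> {1..k}"
  shows "harm_step k x = real m"
proof -
  have "harm_step k x = (\<Sum>m'\<in>{1..k}. if m' = m then real m else 0)"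
    unfolding harm_step_def using assms(1)
    by (intro sum.cong refl) (auto simp: indicator_def dest: harm_interval_disjoint[OF assms(1)])
  then show ?thesis using assms(2) by simp
qed

lemma harm_step_cases:
  "harm_step k x = 0 \<or> (\<exists>m\<in>{1..k}. x \<in> harm_interval k m \<and> harm_step k x = real m)"
proof (cases "\<exists>m\<in>{1..k}. x \<in> harm_interval k m")
  case True
  then obtain m where "m \<in> {1..k}" "x \<in> harm_interval k m" ..
  then show ?thesis by (intro disjI2 bexI[of _ m] conjI harm_step_eq)
next
  case False
  then have "harm_step k x = 0"
    unfolding harm_step_def by (intro sum.neutral) (auto simp: indicator_def)
  then show ?thesis ..
qed

lemma harm_step_nonneg: "0 \<le> harm_step k x"
  unfolding harm_step_def by (intro sum_nonneg) auto

lemma borel_measurable_harm_step [measurable]: "harm_step k \<in> borel_measurable borel"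
  unfolding harm_step_def by measurable

text \<open>On the m-th interval x \<ge> h_(m-1)/h_k \<ge> ln m/(ln k + 1), and x < 1.\<close>
lemma harm_step_le_exp_powr:
  assumes "k \<ge> 1" "0 \<le> x"
  shows "harm_step k x \<le> exp 1 * real k powr x"
  using harm_step_cases[of k x]
proof (elim disjE bexE conjE)
  fix m assume m: "m \<in> {1..k}" and x: "x \<in> harm_interval k m" and step: "harm_step k x = real m"
  have hk: "Defs.harm k > 0" using assms(1) by (simp add: harm_eq_harmonic_number)
  have "x < 1" using x harm_interval_subset[of m k] m by auto
  have "ln (real m) \<le> Defs.harm (m - 1)"
    using ln_le_harm[of "m - 1"] m by (simp add: harm_eq_harmonic_number)
  also have "\<dots> \<le> x * Defs.harm k"
    using x hk unfolding harm_interval_def by (simp add: divide_le_eq)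
  also have "\<dots> \<le> x * (ln (real k) + 1)"
    using harm_le_ln_plus_one[OF assms(1)] assms(2) by (intro mult_left_mono)
  also have "\<dots> \<le> 1 + ln (real k) * x"
    using \<open>x < 1\<close> by (simp add: algebra_simps)
  finally have "exp (ln (real m)) \<le> exp (1 + ln (real k) * x)" by simp
  then show ?thesis
    using m assms(1) step by (simp add: exp_add powr_def mult.commute)
qed (use assms in simp)

section \<open>Permuting the coordinates of a product measure\<close>

definition permute_coords :: "'i set \<Rightarrow> ('i \<Rightarrow> 'i) \<Rightarrow> ('i \<Rightarrow> 'a) \<Rightarrow> 'i \<Rightarrow> 'a" where
  "permute_coords I \<sigma> \<omega> = (\<lambda>i\<in>I. \<omega> (\<sigma> i))"

lemma measurable_permute_coords [measurable]:
  assumes "\<sigma> permutes I"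
  shows "permute_coords I \<sigma> \<in> measurable (\<Pi>\<^sub>M i\<in>I. M) (\<Pi>\<^sub>M i\<in>I. M)"
  unfolding permute_coords_def
  using permutes_in_image[OF assms] by (intro measurable_restrict measurable_component_singleton) auto

lemma vimage_permute_coords_PiE:
  assumes "\<sigma> permutes I"
  shows "permute_coords I \<sigma> -` Pi\<^sub>E I A \<inter> (I \<rightarrow>\<^sub>E X) = (\<Pi>\<^sub>E j\<in>I. A (inv \<sigma> j) \<inter> X)"
proof -
  have "(\<forall>i\<in>I. \<omega> (\<sigma> i) \<in> A i) \<longleftrightarrow> (\<forall>j\<in>I. \<omega> j \<in> A (inv \<sigma> j))" for \<omega>
  proof -
    have "(\<forall>i\<in>I. \<omega> (\<sigma> i) \<in> A i) \<longleftrightarrow> (\<forall>i\<in>I. \<omega> (\<sigma> i) \<in> A (inv \<sigma> (\<sigma> i)))"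
      using permutes_inverses(2)[OF assms] by simp
    also have "\<dots> \<longleftrightarrow> (\<forall>j\<in>\<sigma> ` I. \<omega> j \<in> A (inv \<sigma> j))"
      by simp
    finally show ?thesis
      using permutes_image[OF assms] by simp
  qed
  then show ?thesis
    by (auto simp: permute_coords_def restrict_PiE_iff PiE_iff)
qed

lemma distr_PiM_permute_coords:
  assumes M: "sigma_finite_measure M" and I: "finite I" and \<sigma>: "\<sigma> permutes I"
  shows "distr (\<Pi>\<^sub>M i\<in>I. M) (\<Pi>\<^sub>M i\<in>I. M) (permute_coords I \<sigma>) = (\<Pi>\<^sub>M i\<in>I. M)"
proof -
  have psf: "product_sigma_finite (\<lambda>_. M)"
    using M by (simp add: product_sigma_finite_def)
  have \<sigma>': "inv \<sigma> permutes I"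
    using permutes_inv[OF \<sigma>] .
  show ?thesis
  proof (rule product_sigma_finite.PiM_eqI[OF psf I])
    fix A assume A: "\<And>i. i \<in> I \<Longrightarrow> A i \<in> sets M"
    have "permute_coords I \<sigma> -` Pi\<^sub>E I A \<inter> space (\<Pi>\<^sub>M i\<in>I. M) = (\<Pi>\<^sub>E j\<in>I. A (inv \<sigma> j) \<inter> space M)"
      unfolding space_PiM by (rule vimage_permute_coords_PiE[OF \<sigma>])
    also have "\<dots> = (\<Pi>\<^sub>E j\<in>I. A (inv \<sigma> j))"
      using A sets.sets_into_space permutes_in_image[OF \<sigma>'] by (intro PiE_cong) blast
    finally have "emeasure (distr (\<Pi>\<^sub>M i\<in>I. M) (\<Pi>\<^sub>M i\<in>I. M) (permute_coords I \<sigma>)) (Pi\<^sub>E I A)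
        = emeasure (\<Pi>\<^sub>M i\<in>I. M) (\<Pi>\<^sub>E j\<in>I. A (inv \<sigma> j))"
      using A \<sigma> I by (subst emeasure_distr) (auto intro!: sets_PiM_I_finite)
    also have "\<dots> = (\<Prod>j\<in>I. emeasure M (A (inv \<sigma> j)))"
      using A \<sigma>' by (intro product_sigma_finite.emeasure_PiM[OF psf I]) (auto simp: permutes_in_image)
    also have "\<dots> = (\<Prod>i\<in>I. emeasure M (A i))"
      using prod.permute[OF \<sigma>', of "\<lambda>i. emeasure M (A i)"] by (simp add: comp_def)
    finally show "emeasure (distr (\<Pi>\<^sub>M i\<in>I. M) (\<Pi>\<^sub>M i\<in>I. M) (permute_coords I \<sigma>)) (Pi\<^sub>E I A)
        = (\<Prod>i\<in>I. emeasure M (A i))" .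
  qed simp
qed

lemma exists_sorting_permutation:
  fixes x :: "nat \<Rightarrow> 'a::linorder"
  obtains \<sigma> where "\<sigma> permutes {0..<r}" "\<And>i j. i \<le> j \<Longrightarrow> j < r \<Longrightarrow> x (\<sigma> i) \<le> x (\<sigma> j)"
proof -
  define xs where "xs = sort_key x [0..<r]"
  have len: "length xs = r" and dist: "distinct xs" and set: "set xs = {0..<r}"
    and sorted: "sorted (map x xs)"
    unfolding xs_def by simp_all
  define \<sigma> where "\<sigma> i = (if i < r then xs ! i else i)" for i
  have "bij_betw \<sigma> {0..<r} {0..<r}"
  proof (rule bij_betw_imageI)
    show "inj_on \<sigma> {0..<r}"
      unfolding inj_on_def \<sigma>_def using dist len by (simp add: nth_eq_iff_index_eq)
    have "\<sigma> ` {0..<r} = set xs"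
      using len by (auto simp: \<sigma>_def in_set_conv_nth)
    then show "\<sigma> ` {0..<r} = {0..<r}" using set by simp
  qed
  then have "\<sigma> permutes {0..<r}"
    by (rule bij_imp_permutes) (simp add: \<sigma>_def)
  moreover have "x (\<sigma> i) \<le> x (\<sigma> j)" if "i \<le> j" "j < r" for i j
    using sorted len that unfolding \<sigma>_def by (auto simp: sorted_iff_nth_mono)
  ultimately show ?thesis using that by blast
qed

abbreviation lborel_coords :: "nat \<Rightarrow> (nat \<Rightarrow> real) measure" where
  "lborel_coords r \<equiv> \<Pi>\<^sub>M i\<in>{0..<r}. lborel"

definition sorted_coords :: "nat \<Rightarrow> (nat \<Rightarrow> 'a::linorder) set" where
  "sorted_coords r = {\<xi>. \<forall>i j. i \<le> j \<longrightarrow> j < r \<longrightarrow> \<xi> i \<le> \<xi> j}"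

lemma sets_sorted_coords [measurable]:
  "{\<xi> \<in> space (lborel_coords r). \<xi> \<in> sorted_coords r} \<in> sets (lborel_coords r)"
proof -
  let ?M = "lborel_coords r"
  have "{\<xi> \<in> space ?M. \<xi> \<in> sorted_coords r}
      = {\<xi> \<in> space ?M. \<forall>i\<in>{0..<r}. \<forall>j\<in>{0..<r}. i \<le> j \<longrightarrow> \<xi> i \<le> \<xi> j}"
    unfolding sorted_coords_def by auto
  also have "\<dots> \<in> sets ?M"
  proof (intro sets.sets_Collect_finite_All finite_atLeastLessThan)
    fix i j assume "i \<in> {0..<r}" "j \<in> {0..<r}"
    then have "{\<xi> \<in> space ?M. \<xi> i \<le> \<xi> j} \<in> sets ?M"
      by (intro borel_measurable_le measurable_component_singleton) auto
    then show "{\<xi> \<in> space ?M. i \<le> j \<longrightarrow> \<xi> i \<le> \<xi> j} \<in> sets ?M"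
      by (cases "i \<le> j") simp_all
  qed
  finally show ?thesis .
qed

text \<open>Every point is carried into the sorted cone by one of the r! coordinate permutations,
  each of which preserves the product measure.\<close>
lemma nn_integral_symmetric_le_sorted:
  fixes f :: "(nat \<Rightarrow> real) \<Rightarrow> ennreal"
  assumes f [measurable]: "f \<in> borel_measurable (lborel_coords r)"
    and sym: "\<And>\<sigma> \<xi>. \<sigma> permutes {0..<r} \<Longrightarrow> \<xi> \<in> space (lborel_coords r) \<Longrightarrow>
      f (permute_coords {0..<r} \<sigma> \<xi>) = f \<xi>"
  shows "(\<integral>\<^sup>+\<xi>. f \<xi> \<partial>(lborel_coords r))
    \<le> fact r * (\<integral>\<^sup>+\<xi>. f \<xi> * indicator (sorted_coords r) \<xi> \<partial>(lborel_coords r))"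
proof -
  let ?M = "lborel_coords r"
  define P where "P = {\<sigma>. \<sigma> permutes {0..<r}}"
  define g where "g \<xi> = f \<xi> * indicator (sorted_coords r) \<xi>" for \<xi>
  have g [measurable]: "g \<in> borel_measurable ?M"
    unfolding g_def by measurable
  have "f \<xi> \<le> (\<Sum>\<sigma>\<in>P. g (permute_coords {0..<r} \<sigma> \<xi>))" if \<xi>: "\<xi> \<in> space ?M" for \<xi>
  proof -
    obtain \<sigma> where \<sigma>: "\<sigma> permutes {0..<r}"
      and mono: "\<And>i j. i \<le> j \<Longrightarrow> j < r \<Longrightarrow> \<xi> (\<sigma> i) \<le> \<xi> (\<sigma> j)"
      using exists_sorting_permutation[where x = \<xi> and r = r] by blast
    have "permute_coords {0..<r} \<sigma> \<xi> \<in> sorted_coords r"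
      using mono by (simp add: permute_coords_def sorted_coords_def)
    then have "f \<xi> = g (permute_coords {0..<r} \<sigma> \<xi>)"
      using sym[OF \<sigma> \<xi>] by (simp add: g_def)
    also have "\<dots> \<le> (\<Sum>\<sigma>\<in>P. g (permute_coords {0..<r} \<sigma> \<xi>))"
      using \<sigma> by (intro member_le_sum) (auto simp: P_def finite_permutations)
    finally show ?thesis .
  qed
  then have "(\<integral>\<^sup>+\<xi>. f \<xi> \<partial>?M) \<le> (\<integral>\<^sup>+\<xi>. (\<Sum>\<sigma>\<in>P. g (permute_coords {0..<r} \<sigma> \<xi>)) \<partial>?M)"
    by (intro nn_integral_mono)
  also have "\<dots> = (\<Sum>\<sigma>\<in>P. \<integral>\<^sup>+\<xi>. g (permute_coords {0..<r} \<sigma> \<xi>) \<partial>?M)"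
    by (intro nn_integral_sum) (auto simp: P_def)
  also have "\<dots> = (\<Sum>\<sigma>\<in>P. \<integral>\<^sup>+\<xi>. g \<xi> \<partial>?M)"
  proof (intro sum.cong refl)
    fix \<sigma> assume "\<sigma> \<in> P"
    then have \<sigma>: "\<sigma> permutes {0..<r}" by (simp add: P_def)
    have "(\<integral>\<^sup>+\<xi>. g (permute_coords {0..<r} \<sigma> \<xi>) \<partial>?M) = (\<integral>\<^sup>+\<xi>. g \<xi> \<partial>distr ?M ?M (permute_coords {0..<r} \<sigma>))"
      using \<sigma> by (intro nn_integral_distr[symmetric]) auto
    also have "\<dots> = (\<integral>\<^sup>+\<xi>. g \<xi> \<partial>?M)"
      by (simp add: distr_PiM_permute_coords[OF sigma_finite_lborel _ \<sigma>])
    finally show "(\<integral>\<^sup>+\<xi>. g (permute_coords {0..<r} \<sigma> \<xi>) \<partial>?M) = (\<integral>\<^sup>+\<xi>. g \<xi> \<partial>?M)" .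
  qed
  also have "\<dots> = fact r * (\<integral>\<^sup>+\<xi>. g \<xi> \<partial>?M)"
    by (simp add: P_def card_permutations)
  finally show ?thesis
    by (simp add: g_def)
qed

section \<open>The integral bound\<close>

lemma emeasure_lborel_coords_PiE:
  assumes "\<And>i. i \<in> {0..<r} \<Longrightarrow> A i \<in> sets borel"
  shows "emeasure (lborel_coords r) (Pi\<^sub>E {0..<r} A) = (\<Prod>i\<in>{0..<r}. emeasure lborel (A i))"
proof -
  have "product_sigma_finite (\<lambda>_. lborel :: real measure)"
    by (simp add: product_sigma_finite_def sigma_finite_lborel)
  then show ?thesis
    using assms by (intro product_sigma_finite.emeasure_PiM) auto
qed

lemma Omega_eq: "Omega r = sorted_coords r \<inter> (\<Pi>\<^sub>E i\<in>{0..<r}. {0..1})"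
  by (auto simp: Omega_def sorted_coords_def PiE_iff extensional_def)

lemma sets_Omega [measurable]: "Omega r \<in> sets (lborel_coords r)"
proof -
  have "Omega r = {\<xi> \<in> space (lborel_coords r). \<xi> \<in> sorted_coords r} \<inter> (\<Pi>\<^sub>E i\<in>{0..<r}. {0..1})"
    by (auto simp: Omega_eq space_PiM PiE_iff)
  then show ?thesis
    by (simp add: sets.Int sets_PiM_I_finite)
qed

lemma emeasure_Omega_le_one: "emeasure (lborel_coords r) (Omega r) \<le> 1"
proof -
  have "emeasure (lborel_coords r) (Omega r) \<le> emeasure (lborel_coords r) (\<Pi>\<^sub>E i\<in>{0..<r}. {0..1})"
    by (intro emeasure_mono sets_PiM_I_finite) (auto simp: Omega_eq)
  also have "\<dots> = 1"
    by (simp add: emeasure_lborel_coords_PiE)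
  finally show ?thesis .
qed

lemma minfun_nonneg: "0 \<le> minfun k r \<xi>"
  unfolding minfun_def
  by (subst Min_ge_iff) (auto intro!: mult_nonneg_nonneg add_nonneg_nonneg sum_nonneg)

lemma minfun_le_one: "minfun k r \<xi> \<le> 1"
proof -
  have "minfun k r \<xi> \<le> (1/2) ^ 0 * ((\<Sum>i<0. real k powr \<xi> i) + 1)"
    unfolding minfun_def by (intro Min_le finite_imageI imageI) auto
  then show ?thesis by simp
qed

lemma borel_measurable_minfun [measurable]: "minfun k r \<in> borel_measurable (lborel_coords r)"
  unfolding minfun_def[abs_def]
proof (intro borel_measurable_Min finite_atLeastAtMost borel_measurable_times
    borel_measurable_add borel_measurable_sum borel_measurable_const)
  fix j i assume "j \<in> {0..r}" "i \<in> {..<j}"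
  then have "(\<lambda>\<xi>. \<xi> i) \<in> borel_measurable (lborel_coords r)"
    using measurable_component_singleton[of i "{0..<r}" "\<lambda>_. lborel"] by simp
  then show "(\<lambda>\<xi>. real k powr \<xi> i) \<in> borel_measurable (lborel_coords r)"
    by measurable
qed

lemma integrable_Omega_minfun:
  "integrable (lborel_coords r) (\<lambda>\<xi>. indicator (Omega r) \<xi> * minfun k r \<xi>)"
proof -
  have "emeasure (lborel_coords r) (Omega r) < \<infinity>"
    using emeasure_Omega_le_one by (rule le_less_trans) simp
  then show ?thesis
    using integrableI_bounded_set_indicator[of "Omega r" "lborel_coords r" "minfun k r" 1]
      minfun_nonneg minfun_le_one by simp
qed

definition unit_cube :: "nat \<Rightarrow> (nat \<Rightarrow> real) set" where
  "unit_cube r = (\<Pi>\<^sub>E i\<in>{0..<r}. {0..<1})"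

definition harm_box :: "nat \<Rightarrow> nat \<Rightarrow> (nat \<Rightarrow> nat) \<Rightarrow> (nat \<Rightarrow> real) set" where
  "harm_box k r a = (\<Pi>\<^sub>E i\<in>{0..<r}. harm_interval k (a i))"

definition step_weight :: "nat \<Rightarrow> nat \<Rightarrow> (nat \<Rightarrow> real) \<Rightarrow> real" where
  "step_weight k r \<xi> = indicator (unit_cube r) \<xi> * min_subset_weight r (\<lambda>i. harm_step k (\<xi> i))"

lemma sets_harm_box [measurable]: "harm_box k r a \<in> sets (lborel_coords r)"
  unfolding harm_box_def by (intro sets_PiM_I_finite) auto

lemma emeasure_harm_box:
  assumes "k \<ge> 1" "a \<in> {0..<r} \<rightarrow>\<^sub>E {1..k}"
  shows "emeasure (lborel_coords r) (harm_box k r a)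
    = ennreal (1 / (Defs.harm k ^ r * (\<Prod>i<r. real (a i))))"
proof -
  have "emeasure (lborel_coords r) (harm_box k r a) = (\<Prod>i\<in>{0..<r}. emeasure lborel (harm_interval k (a i)))"
    unfolding harm_box_def by (intro emeasure_lborel_coords_PiE) simp
  also have "\<dots> = (\<Prod>i\<in>{0..<r}. ennreal (1 / (real (a i) * Defs.harm k)))"
    using assms by (intro prod.cong refl emeasure_harm_interval) (auto simp: PiE_iff)
  also have "\<dots> = ennreal (\<Prod>i\<in>{0..<r}. 1 / (real (a i) * Defs.harm k))"
    by (intro prod_ennreal) (simp add: harm_eq_harmonic_number harm_nonneg)
  finally show ?thesis
    by (simp add: prod_dividef prod.distrib atLeast0LessThan mult.commute)
qed

lemma harm_box_disjoint:
  assumes "a \<in> {0..<r} \<rightarrow>\<^sub>E A" "b \<in> {0..<r} \<rightarrow>\<^sub>E B" "\<xi> \<in> harm_box k r a" "\<xi> \<in> harm_box k r b"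
  shows "a = b"
proof
  fix i show "a i = b i"
    using assms harm_interval_disjoint[of "\<xi> i" k "a i" "b i"]
    by (cases "i < r") (auto simp: harm_box_def PiE_iff extensional_def)
qed

lemma step_weight_on_harm_box:
  assumes a: "a \<in> {0..<r} \<rightarrow>\<^sub>E {1..k}" and \<xi>: "\<xi> \<in> harm_box k r a"
  shows "step_weight k r \<xi> = min_subset_weight r (\<lambda>i. real (a i))"
proof -
  have \<xi>a: "\<xi> i \<in> harm_interval k (a i)" and ak: "a i \<in> {1..k}" if "i < r" for i
    using a \<xi> that by (auto simp: harm_box_def PiE_iff)
  have "\<xi> \<in> unit_cube r"
    using \<xi> \<xi>a ak harm_interval_subset unfolding unit_cube_def harm_box_def PiE_iff
    by (meson atLeastAtMost_iff atLeastLessThan_iff subsetD)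
  moreover have "min_subset_weight r (\<lambda>i. harm_step k (\<xi> i)) = min_subset_weight r (\<lambda>i. real (a i))"
    using harm_step_eq[OF \<xi>a ak] by (intro min_subset_weight_cong)
  ultimately show ?thesis
    by (simp add: step_weight_def)
qed

lemma borel_measurable_step_weight [measurable]:
  "step_weight k r \<in> borel_measurable (lborel_coords r)"
proof -
  have "(\<lambda>\<xi>. min_subset_weight r (\<lambda>i. harm_step k (\<xi> i))) \<in> borel_measurable (lborel_coords r)"
  proof (rule borel_measurable_min_subset_weight)
    fix i assume "i < r"
    then have "(\<lambda>\<xi>. \<xi> i) \<in> borel_measurable (lborel_coords r)"
      using measurable_component_singleton[of i "{0..<r}" "\<lambda>_. lborel"] by simp
    then show "(\<lambda>\<xi>. harm_step k (\<xi> i)) \<in> borel_measurable (lborel_coords r)"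
      by measurable
  qed
  moreover have "unit_cube r \<in> sets (lborel_coords r)"
    unfolding unit_cube_def by (intro sets_PiM_I_finite) auto
  ultimately show ?thesis
    unfolding step_weight_def[abs_def] by measurable
qed

lemma step_weight_permute_coords:
  assumes \<sigma>: "\<sigma> permutes {0..<r}" and \<xi>: "\<xi> \<in> space (lborel_coords r)"
  shows "step_weight k r (permute_coords {0..<r} \<sigma> \<xi>) = step_weight k r \<xi>"
proof -
  have "permute_coords {0..<r} \<sigma> \<xi> \<in> unit_cube r \<longleftrightarrow> \<xi> \<in> unit_cube r"
    using vimage_permute_coords_PiE[OF \<sigma>, of "\<lambda>_. {0..<1}" UNIV] \<xi>
    by (auto simp: unit_cube_def space_PiM)
  moreover have "min_subset_weight r (\<lambda>i. harm_step k (permute_coords {0..<r} \<sigma> \<xi> i))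
      = min_subset_weight r ((\<lambda>i. harm_step k (\<xi> i)) \<circ> \<sigma>)"
    by (intro min_subset_weight_cong) (simp add: permute_coords_def)
  ultimately show ?thesis
    by (simp add: step_weight_def min_subset_weight_permute[OF \<sigma>] indicator_def)
qed

lemma step_weight_le_minfun:
  assumes k: "k \<ge> 1" and \<xi>: "\<xi> \<in> sorted_coords r"
  shows "step_weight k r \<xi> \<le> exp 1 * (indicator (Omega r) \<xi> * minfun k r \<xi>)"
proof (cases "\<xi> \<in> unit_cube r")
  case False
  then show ?thesis by (simp add: step_weight_def minfun_nonneg)
next
  case True
  then have "\<xi> \<in> Omega r"
    using \<xi> by (auto simp: Omega_eq unit_cube_def PiE_iff)
  have "minfun k r \<xi> \<in> (\<lambda>j. (1/2) ^ j * ((\<Sum>i<j. real k powr \<xi> i) + 1)) ` {0..r}"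
    unfolding minfun_def by (intro Min_in) auto
  then obtain j where j: "j \<le> r" and min: "minfun k r \<xi> = (1/2) ^ j * ((\<Sum>i<j. real k powr \<xi> i) + 1)"
    by auto
  have "step_weight k r \<xi> \<le> subset_weight (\<lambda>i. harm_step k (\<xi> i)) {0..<j}"
    using True j by (simp add: step_weight_def min_subset_weight_le)
  also have "\<dots> = (1/2) ^ j * ((\<Sum>i<j. harm_step k (\<xi> i)) + 1)"
    by (simp add: subset_weight_def atLeast0LessThan)
  also have "\<dots> \<le> (1/2) ^ j * ((\<Sum>i<j. exp 1 * real k powr \<xi> i) + 1)"
    using \<open>\<xi> \<in> Omega r\<close> j k harm_step_le_exp_powr
    by (intro mult_left_mono add_right_mono sum_mono) (auto simp: Omega_def)
  also have "\<dots> \<le> (1/2) ^ j * (exp 1 * ((\<Sum>i<j. real k powr \<xi> i) + 1))"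
    by (intro mult_left_mono) (simp_all add: sum_distrib_left[symmetric] algebra_simps)
  also have "\<dots> = exp 1 * (indicator (Omega r) \<xi> * minfun k r \<xi>)"
    using \<open>\<xi> \<in> Omega r\<close> min by simp
  finally show ?thesis .
qed

lemma sum_harm_box_le_step_weight:
  assumes "k \<ge> 1"
  shows "(\<Sum>a\<in>{0..<r} \<rightarrow>\<^sub>E {1..k}. ennreal (min_subset_weight r (\<lambda>i. real (a i))) * indicator (harm_box k r a) \<xi>)
    \<le> ennreal (step_weight k r \<xi>)"
proof (cases "\<exists>a\<in>{0..<r} \<rightarrow>\<^sub>E {1..k}. \<xi> \<in> harm_box k r a")
  case True
  then obtain a where a: "a \<in> {0..<r} \<rightarrow>\<^sub>E {1..k}" and \<xi>: "\<xi> \<in> harm_box k r a" ..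
  have "(\<Sum>b\<in>{0..<r} \<rightarrow>\<^sub>E {1..k}. ennreal (min_subset_weight r (\<lambda>i. real (b i))) * indicator (harm_box k r b) \<xi>)
      = (\<Sum>b\<in>{0..<r} \<rightarrow>\<^sub>E {1..k}. if b = a then ennreal (min_subset_weight r (\<lambda>i. real (a i))) else 0)"
    using a \<xi> by (intro sum.cong refl) (auto simp: indicator_def dest: harm_box_disjoint)
  also have "\<dots> = ennreal (step_weight k r \<xi>)"
    using a \<xi> by (simp add: step_weight_on_harm_box finite_PiE)
  finally show ?thesis by simp
next
  case False
  then show ?thesis by (simp add: indicator_def)
qed

lemma sum_le_nn_integral_step_weight:
  assumes k: "k \<ge> 1"
  shows "(\<Sum>a\<in>{0..<r} \<rightarrow>\<^sub>E {1..k}.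
      ennreal (min_subset_weight r (\<lambda>i. real (a i)) / (Defs.harm k ^ r * (\<Prod>i<r. real (a i)))))
    \<le> (\<integral>\<^sup>+\<xi>. step_weight k r \<xi> \<partial>lborel_coords r)"
proof -
  let ?A = "{0..<r} \<rightarrow>\<^sub>E {1..k}" and ?G = "\<lambda>a. min_subset_weight r (\<lambda>i. real (a i))"
  have "ennreal (?G a / (Defs.harm k ^ r * (\<Prod>i<r. real (a i))))
      = (\<integral>\<^sup>+\<xi>. ennreal (?G a) * indicator (harm_box k r a) \<xi> \<partial>lborel_coords r)" if "a \<in> ?A" for a
    using emeasure_harm_box[OF k that] min_subset_weight_nonneg[of "\<lambda>i. real (a i)" r]
    by (simp add: nn_integral_cmult_indicator ennreal_mult' divide_inverse)
  then have "(\<Sum>a\<in>?A. ennreal (?G a / (Defs.harm k ^ r * (\<Prod>i<r. real (a i)))))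
      = (\<Sum>a\<in>?A. \<integral>\<^sup>+\<xi>. ennreal (?G a) * indicator (harm_box k r a) \<xi> \<partial>lborel_coords r)"
    by (intro sum.cong) auto
  also have "\<dots> = (\<integral>\<^sup>+\<xi>. (\<Sum>a\<in>?A. ennreal (?G a) * indicator (harm_box k r a) \<xi>) \<partial>lborel_coords r)"
    by (intro nn_integral_sum[symmetric]) measurable
  also have "\<dots> \<le> (\<integral>\<^sup>+\<xi>. step_weight k r \<xi> \<partial>lborel_coords r)"
    by (intro nn_integral_mono sum_harm_box_le_step_weight k)
  finally show ?thesis .
qed

lemma sum_min_subset_weight_le:
  assumes k: "k \<ge> 1"
  shows "(\<Sum>a\<in>{0..<r} \<rightarrow>\<^sub>E {1..k}.
      min_subset_weight r (\<lambda>i. real (a i)) / (Defs.harm k ^ r * (\<Prod>i<r. real (a i))))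
    \<le> exp 1 * fact r * (\<integral>\<xi>. indicator (Omega r) \<xi> * minfun k r \<xi> \<partial>lborel_coords r)"
proof -
  let ?\<Omega> = "\<lambda>\<xi>. indicator (Omega r) \<xi> * minfun k r \<xi>"
  have I_nonneg: "0 \<le> (\<integral>\<xi>. ?\<Omega> \<xi> \<partial>lborel_coords r)"
    by (simp add: minfun_nonneg)
  have "ennreal (\<Sum>a\<in>{0..<r} \<rightarrow>\<^sub>E {1..k}.
      min_subset_weight r (\<lambda>i. real (a i)) / (Defs.harm k ^ r * (\<Prod>i<r. real (a i))))
    = (\<Sum>a\<in>{0..<r} \<rightarrow>\<^sub>E {1..k}.
      ennreal (min_subset_weight r (\<lambda>i. real (a i)) / (Defs.harm k ^ r * (\<Prod>i<r. real (a i)))))"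
    by (intro sum_ennreal[symmetric] divide_nonneg_nonneg min_subset_weight_nonneg mult_nonneg_nonneg
        zero_le_power prod_nonneg) (simp_all add: harm_eq_harmonic_number harm_nonneg)
  also have "\<dots> \<le> (\<integral>\<^sup>+\<xi>. step_weight k r \<xi> \<partial>lborel_coords r)"
    by (rule sum_le_nn_integral_step_weight[OF k])
  also have "\<dots> \<le> fact r * (\<integral>\<^sup>+\<xi>. ennreal (step_weight k r \<xi>) * indicator (sorted_coords r) \<xi> \<partial>lborel_coords r)"
    by (rule nn_integral_symmetric_le_sorted[where f = "\<lambda>\<xi>. ennreal (step_weight k r \<xi>)"])
      (simp_all add: step_weight_permute_coords)
  also have "\<dots> \<le> fact r * (\<integral>\<^sup>+\<xi>. ennreal (exp 1) * ?\<Omega> \<xi> \<partial>lborel_coords r)"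
  proof (intro mult_left_mono nn_integral_mono)
    fix \<xi>
    show "ennreal (step_weight k r \<xi>) * indicator (sorted_coords r) \<xi> \<le> ennreal (exp 1) * ?\<Omega> \<xi>"
    proof (cases "\<xi> \<in> sorted_coords r")
      case True
      then show ?thesis
        using step_weight_le_minfun[OF k True] by (simp add: ennreal_mult'[symmetric] ennreal_leI)
    qed simp
  qed simp
  also have "\<dots> = fact r * (exp 1 * ennreal (\<integral>\<xi>. ?\<Omega> \<xi> \<partial>lborel_coords r))"
    using integrable_Omega_minfun minfun_nonneg
    by (simp add: nn_integral_cmult nn_integral_eq_integral)
  also have "\<dots> = ennreal (exp 1 * fact r * (\<integral>\<xi>. ?\<Omega> \<xi> \<partial>lborel_coords r))"
  proof -
    have "(fact r :: ennreal) = ennreal (fact r)"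
      by (metis of_nat_fact ennreal_of_nat_eq_real_of_nat)
    then show ?thesis
      using I_nonneg by (simp add: ennreal_mult' mult_ac)
  qed
  finally show ?thesis
    using I_nonneg by (subst (asm) ennreal_le_iff) auto
qed

theorem lemma5p1:
  "\<exists>C::real. C > 0 \<and> (\<forall>k r::nat. k \<ge> 1 \<longrightarrow> r \<ge> 1 \<longrightarrow>
     (\<Sum>a\<in>{0..<r} \<rightarrow>\<^sub>E {1..k}. real (card (subset_sums r a)) / (\<Prod>i<r. real (a i)))
     \<le> C * (2 * harm k) ^ r * fact r *
        (\<integral>\<xi>. indicator (Omega r) \<xi> * minfun k r \<xi> \<partial>(\<Pi>\<^sub>M i\<in>{0..<r}. lborel)))"
proof (intro exI[of _ "exp 1"] conjI allI impI)
  fix k r :: nat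
  assume k: "k \<ge> 1"
  let ?h = "Defs.harm k" and ?G = "\<lambda>a. min_subset_weight r (\<lambda>i. real (a i))"
    and ?I = "\<integral>\<xi>. indicator (Omega r) \<xi> * minfun k r \<xi> \<partial>lborel_coords r"
  have h: "?h > 0" using k by (simp add: harm_eq_harmonic_number)
  have "(\<Sum>a\<in>{0..<r} \<rightarrow>\<^sub>E {1..k}. real (card (subset_sums r a)) / (\<Prod>i<r. real (a i)))
      \<le> (\<Sum>a\<in>{0..<r} \<rightarrow>\<^sub>E {1..k}. (2 * ?h) ^ r * (?G a / (?h ^ r * (\<Prod>i<r. real (a i)))))"
    using h card_subset_sums_le_min_subset_weight
    by (intro sum_mono) (auto simp: power_mult_distrib divide_right_mono prod_nonneg)
  also have "\<dots> = (2 * ?h) ^ r * (\<Sum>a\<in>{0..<r} \<rightarrow>\<^sub>E {1..k}. ?G a / (?h ^ r * (\<Prod>i<r. real (a i))))"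
    by (rule sum_distrib_left[symmetric])
  also have "\<dots> \<le> (2 * ?h) ^ r * (exp 1 * fact r * ?I)"
    using h by (intro mult_left_mono sum_min_subset_weight_le k) simp
  finally show "(\<Sum>a\<in>{0..<r} \<rightarrow>\<^sub>E {1..k}. real (card (subset_sums r a)) / (\<Prod>i<r. real (a i)))
     \<le> exp 1 * (2 * ?h) ^ r * fact r * ?I"
    by (simp add: mult_ac)
qed simp

end
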